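(* Let $f(x_1,x_2)=(-2+x_1+x_2)^2$ and $g(x_1,x_2)=1-x_1^2-x_2^2$; the global minimum of $f$ on $\{x: g(x)\geqslant 0\}$ is $2(3-2\sqrt{2})>0$. For every $r\in\mathbb{N}$ and every $\lambda\geqslant 0$, there do not exist SDSOS polynomials $\sigma_0,\sigma_1$ such that $$(x_1^2+x_2^2)^r\,(f(x_1,x_2)-\lambda)=\sigma_0(x_1,x_2)+\sigma_1(x_1,x_2)\,g(x_1,x_2).$$ Hence the optimal value of the r-SDSOS (and therefore of the r-DSOS) relaxation, $\sup\{\lambda: (x_1^2+x_2^2)^r(f-\lambda)=\sigma_0+\sigma_1 g,\ \sigma_0,\sigma_1 \text{ SDSOS (resp. DSOS)}\}$, is at most $0$ for every $r$, so these hierarchies do not converge to the global minimum.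
   Context: For $\alpha\in\mathbb{N}^2$ write $x^\alpha=x_1^{\alpha_1}x_2^{\alpha_2}$. A polynomial is SDSOS if it is of the form $\sum_k (p_k x^{\alpha(k)}+q_k x^{\beta(k)})^2$ (finite sum) with $p_k,q_k\in\mathbb{R}$ and $\alpha(k),\beta(k)\in\mathbb{N}^2$. A polynomial is DSOS if it is a finite nonnegative combination of polynomials of the forms $(x^\alpha)^2$, $(x^\alpha+x^\beta)^2$, $(x^\alpha-x^\beta)^2$; every DSOS polynomial is SDSOS. *)

theory Defs
  imports Complex_Main
begin

text \<open>Polynomials in two real variables are represented by their polynomial
functions real => real => real (two real polynomials are equal iff their
functions on R^2 agree).\<close>

definition mono2 :: "nat \<times> nat \<Rightarrow> real \<Rightarrow> real \<Rightarrow> real" where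
  "mono2 a x1 x2 = x1 ^ fst a * x2 ^ snd a"

definition sdsos :: "(real \<Rightarrow> real \<Rightarrow> real) \<Rightarrow> bool" where
  "sdsos s \<longleftrightarrow> (\<exists>ts :: (real \<times> real \<times> (nat \<times> nat) \<times> (nat \<times> nat)) list.
      \<forall>x1 x2. s x1 x2 =
        (\<Sum>(p, q, a, b) \<leftarrow> ts. (p * mono2 a x1 x2 + q * mono2 b x1 x2) ^ 2))"

definition f_ex :: "real \<Rightarrow> real \<Rightarrow> real" where
  "f_ex x1 x2 = (-2 + x1 + x2) ^ 2"

definition g_ex :: "real \<Rightarrow> real \<Rightarrow> real" where
  "g_ex x1 x2 = 1 - x1 ^ 2 - x2 ^ 2"

end

theory Submission
  imports Defs
begin

text \<open>Write \<open>c = 1/\<surd>2\<close> and consider the linear functional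
\<open>L s = s(c,c) + s(-c,c) + s(c,-c) - s(-c,-c)\<close>. On a monomial \<open>x\<^sup>\<alpha>\<close> the four
evaluations differ only by the signs \<open>(-1)\<^sup>\<alpha>\<^sub>1\<close>, \<open>(-1)\<^sup>\<alpha>\<^sub>2\<close>, and a case check on
these signs shows that \<open>L\<close> maps every binomial square \<open>(p x\<^sup>\<alpha> + q x\<^sup>\<beta>)\<^sup>2\<close> to
\<open>2(P+Q)\<^sup>2\<close> or \<open>2(P-Q)\<^sup>2\<close>, where \<open>P = p c\<^sup>|\<^sup>\<alpha>\<^sup>|\<close> and \<open>Q = q c\<^sup>|\<^sup>\<beta>\<^sup>|\<close>; hence \<open>L\<close> is nonnegative on SDSOS polynomials. The four
points lie on the circle \<open>g = 0\<close>, where a certificate forces \<open>\<sigma>\<^sub>0 = f - \<lambda>\<close>, but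
\<open>L (f - \<lambda>) = 8 - 8\<surd>2 - 2\<lambda> < 0\<close>.\<close>

definition corner_functional :: "real \<Rightarrow> (real \<Rightarrow> real \<Rightarrow> real) \<Rightarrow> real" where
  "corner_functional c s = s c c + s (- c) c + s c (- c) - s (- c) (- c)"

lemma corner_functional_sum_list:
  "corner_functional c (\<lambda>x1 x2. \<Sum>t \<leftarrow> ts. h t x1 x2) = (\<Sum>t \<leftarrow> ts. corner_functional c (h t))"
  by (induction ts) (simp_all add: corner_functional_def)

lemma signed_binomial_squares_nonneg:
  fixes P Q :: real
  shows "0 \<le> (P + Q)^2 + ((-1)^a1 * P + (-1)^b1 * Q)^2 + ((-1)^a2 * P + (-1)^b2 * Q)^2
              - ((-1)^a1 * (-1)^a2 * P + (-1)^b1 * (-1)^b2 * Q)^2"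
proof -
  have "(P + Q)^2 + ((-1)^a1 * P + (-1)^b1 * Q)^2 + ((-1)^a2 * P + (-1)^b2 * Q)^2
          - ((-1)^a1 * (-1)^a2 * P + (-1)^b1 * (-1)^b2 * Q)^2 \<in> {2 * (P + Q)^2, 2 * (P - Q)^2}"
    by (simp add: minus_one_power_iff power2_eq_square algebra_simps)
  then show ?thesis
    by (elim insertE emptyE) (metis mult_nonneg_nonneg zero_le_power2 zero_le_numeral)+
qed

lemma corner_functional_binomial_square_nonneg:
  "0 \<le> corner_functional c (\<lambda>x1 x2. (p * mono2 a x1 x2 + q * mono2 b x1 x2)^2)"
proof -
  obtain a1 a2 b1 b2 where ab: "a = (a1, a2)" "b = (b1, b2)" by fastforce
  define P where "P = p * (c^a1 * c^a2)"
  define Q where "Q = q * (c^b1 * c^b2)"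
  have "corner_functional c (\<lambda>x1 x2. (p * mono2 a x1 x2 + q * mono2 b x1 x2)^2)
      = (P + Q)^2 + ((-1)^a1 * P + (-1)^b1 * Q)^2 + ((-1)^a2 * P + (-1)^b2 * Q)^2
          - ((-1)^a1 * (-1)^a2 * P + (-1)^b1 * (-1)^b2 * Q)^2"
    unfolding corner_functional_def P_def Q_def ab mono2_def
    by (simp add: power_minus[of c] algebra_simps)
  then show ?thesis using signed_binomial_squares_nonneg by simp
qed

lemma sdsos_corner_functional_nonneg:
  assumes "sdsos s"
  shows "0 \<le> corner_functional c s"
proof -
  obtain ts where s: "s = (\<lambda>x1 x2.
      \<Sum>(p, q, a, b) \<leftarrow> ts. (p * mono2 a x1 x2 + q * mono2 b x1 x2)^2)"
    using assms unfolding sdsos_def by (auto simp: fun_eq_iff)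
  have "corner_functional c s = (\<Sum>(p, q, a, b) \<leftarrow> ts.
      corner_functional c (\<lambda>x1 x2. (p * mono2 a x1 x2 + q * mono2 b x1 x2)^2))"
    unfolding s case_prod_unfold by (rule corner_functional_sum_list)
  also have "\<dots> \<ge> 0"
    by (intro sum_list_nonneg) (auto simp: corner_functional_binomial_square_nonneg)
  finally show ?thesis .
qed

lemma sqrt2_bounds: "1 < sqrt (2::real)" "sqrt 2 < 3 / 2"
proof -
  show "1 < sqrt (2::real)" by simp
  have "sqrt 2 < sqrt ((3 / 2)^2)" by (subst real_sqrt_less_iff) (simp add: power2_eq_square)
  then show "sqrt 2 < 3 / 2" by simp
qed

lemma f_ex_min_value: "2 * (3 - 2 * sqrt 2) = (2 - sqrt 2)^2"
  by (simp add: power2_eq_square algebra_simps)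

lemma f_ex_ge_min_on_disc:
  assumes "0 \<le> g_ex x1 x2"
  shows "2 * (3 - 2 * sqrt 2) \<le> f_ex x1 x2"
proof -
  have "(x1 + x2)^2 \<le> 2"
    using assms sum_squares_ge_zero[of "x1 - x2" 0]
    by (simp add: g_ex_def power2_eq_square algebra_simps)
  then have "x1 + x2 \<le> sqrt 2" by (rule real_le_rsqrt)
  then have "(2 - sqrt 2)^2 \<le> (2 - x1 - x2)^2"
    using sqrt2_bounds by (intro power_mono) auto
  then show ?thesis
    by (simp add: f_ex_min_value f_ex_def power2_eq_square algebra_simps)
qed

lemma corner_coordinate_sq: "(sqrt 2 / 2)^2 = (1 / 2 :: real)"
  by (simp add: power_divide)

lemma f_ex_attains_min_on_disc:
  "0 \<le> g_ex (sqrt 2 / 2) (sqrt 2 / 2) \<and> f_ex (sqrt 2 / 2) (sqrt 2 / 2) = 2 * (3 - 2 * sqrt 2)"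
  by (simp add: g_ex_def f_ex_def corner_coordinate_sq f_ex_min_value power2_eq_square algebra_simps)

lemma no_sdsos_certificate:
  assumes "0 \<le> lam" and "sdsos \<sigma>0"
    and cert: "\<forall>x1 x2. (x1^2 + x2^2)^r * (f_ex x1 x2 - lam) = \<sigma>0 x1 x2 + \<sigma>1 x1 x2 * g_ex x1 x2"
  shows False
proof -
  define c :: real where "c = sqrt 2 / 2"
  have on_circle: "\<sigma>0 x y = f_ex x y - lam" if "x^2 = 1 / 2" "y^2 = 1 / 2" for x y
    using cert[rule_format, of x y] that by (simp add: g_ex_def)
  have "c^2 = 1 / 2" "(- c)^2 = 1 / 2"
    by (simp_all add: c_def corner_coordinate_sq)
  then have "corner_functional c \<sigma>0 = corner_functional c f_ex - 2 * lam"
    by (simp add: corner_functional_def on_circle)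
  also have "\<dots> = 8 - 8 * sqrt 2 - 2 * lam"
    by (simp add: corner_functional_def f_ex_def c_def power2_eq_square algebra_simps)
  also have "\<dots> < 0"
    using sqrt2_bounds assms(1) by linarith
  finally show False
    using sdsos_corner_functional_nonneg[OF \<open>sdsos \<sigma>0\<close>, of c] by linarith
qed

theorem mainTheorem4:
  shows "(\<forall>x1 x2. g_ex x1 x2 \<ge> 0 \<longrightarrow> f_ex x1 x2 \<ge> 2 * (3 - 2 * sqrt 2))
       \<and> (\<exists>x1 x2. g_ex x1 x2 \<ge> 0 \<and> f_ex x1 x2 = 2 * (3 - 2 * sqrt 2))
       \<and> 2 * (3 - 2 * sqrt 2) > 0
       \<and> (\<forall>(r::nat) (lam::real). lam \<ge> 0 \<longrightarrow>
            \<not> (\<exists>\<sigma>0 \<sigma>1. sdsos \<sigma>0 \<and> sdsos \<sigma>1 \<and>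
                 (\<forall>x1 x2. (x1 ^ 2 + x2 ^ 2) ^ r * (f_ex x1 x2 - lam)
                          = \<sigma>0 x1 x2 + \<sigma>1 x1 x2 * g_ex x1 x2)))"
  using f_ex_ge_min_on_disc f_ex_attains_min_on_disc sqrt2_bounds no_sdsos_certificate
  by fastforce

end
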